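(* Let $G$ be a Lindelöf Hausdorff topological group whose underlying space is basically disconnected. Then either $G$ is a $P$-space, or $G$ has a nondiscrete topological quotient group $G/N$ (with $N$ a closed normal subgroup) of countable pseudocharacter which contains an open subgroup that is Boolean and basically disconnected.
   Context: All spaces are Tychonoff. A space is basically disconnected if the closure of every cozero set in it is open. A space is a $P$-space if every $G_\delta$-subset is open. For a topological group, countable pseudocharacter means the identity element is a $G_\delta$-set. A group is Boolean if every element has order at most $2$. The quotient $G/N$ carries the quotient topology. *)

theory Defs
  imports "HOL-Analysis.Analysis" "HOL-Algebra.Algebra"
begin

definition topological_group :: "('a, 'b) monoid_scheme \<Rightarrow> 'a topology \<Rightarrow> bool" where
  "topological_group G T \<longleftrightarrow> group G \<and> topspace T = carrier G \<and>
     continuous_map (prod_topology T T) T (\<lambda>p. fst p \<otimes>\<^bsub>G\<^esub> snd p) \<and>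
     continuous_map T T (\<lambda>x. inv\<^bsub>G\<^esub> x)"

definition cozero_set :: "'a topology \<Rightarrow> 'a set \<Rightarrow> bool" where
  "cozero_set Xt S \<longleftrightarrow> (\<exists>g. continuous_map Xt euclideanreal g \<and> S = {x \<in> topspace Xt. g x \<noteq> (0::real)})"

definition basically_disconnected :: "'a topology \<Rightarrow> bool" where
  "basically_disconnected Xt \<longleftrightarrow> (\<forall>C. cozero_set Xt C \<longrightarrow> openin Xt (Xt closure_of C))"

definition gdelta_in :: "'a topology \<Rightarrow> 'a set \<Rightarrow> bool" where
  "gdelta_in Xt S \<longleftrightarrow> (\<exists>\<F>. countable \<F> \<and> \<F> \<noteq> {} \<and> (\<forall>U\<in>\<F>. openin Xt U) \<and> S = \<Inter>\<F>)"

definition P_space :: "'a topology \<Rightarrow> bool" where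
  "P_space Xt \<longleftrightarrow> (\<forall>S. gdelta_in Xt S \<longrightarrow> openin Xt S)"

definition countable_pseudocharacter :: "('a, 'b) monoid_scheme \<Rightarrow> 'a topology \<Rightarrow> bool" where
  "countable_pseudocharacter G T \<longleftrightarrow> gdelta_in T {\<one>\<^bsub>G\<^esub>}"

definition boolean_group :: "('a, 'b) monoid_scheme \<Rightarrow> bool" where
  "boolean_group G \<longleftrightarrow> (\<forall>x\<in>carrier G. x \<otimes>\<^bsub>G\<^esub> x = \<one>\<^bsub>G\<^esub>)"

definition quotient_topology :: "'a topology \<Rightarrow> ('a \<Rightarrow> 'c) \<Rightarrow> 'c topology" where
  "quotient_topology Xt f = topology (\<lambda>U. U \<subseteq> f ` topspace Xt \<and> openin Xt {x \<in> topspace Xt. f x \<in> U})"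

definition quotient_group_topology :: "('a, 'b) monoid_scheme \<Rightarrow> 'a topology \<Rightarrow> 'a set \<Rightarrow> 'a set topology" where
  "quotient_group_topology G T N = quotient_topology T (\<lambda>x. N #>\<^bsub>G\<^esub> x)"

definition discrete_space :: "'a topology \<Rightarrow> bool" where
  "discrete_space Xt \<longleftrightarrow> (\<forall>x\<in>topspace Xt. openin Xt {x})"

end

theory Submission
  imports Defs
begin

lemma openin_quotient_topology:
  "openin (quotient_topology Xt f) U \<longleftrightarrow>
     U \<subseteq> f ` topspace Xt \<and> openin Xt {x \<in> topspace Xt. f x \<in> U}"
proof -
  have "istopology (\<lambda>U. U \<subseteq> f ` topspace Xt \<and> openin Xt {x \<in> topspace Xt. f x \<in> U})"
    unfolding istopology_def
  proof (rule conjI; intro allI impI)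
    fix S R
    assume "S \<subseteq> f ` topspace Xt \<and> openin Xt {x \<in> topspace Xt. f x \<in> S}"
      and "R \<subseteq> f ` topspace Xt \<and> openin Xt {x \<in> topspace Xt. f x \<in> R}"
    moreover have "{x \<in> topspace Xt. f x \<in> S \<inter> R} =
        {x \<in> topspace Xt. f x \<in> S} \<inter> {x \<in> topspace Xt. f x \<in> R}" by auto
    ultimately show "S \<inter> R \<subseteq> f ` topspace Xt \<and> openin Xt {x \<in> topspace Xt. f x \<in> S \<inter> R}"
      by auto
  next
    fix \<K> assume "\<forall>S\<in>\<K>. S \<subseteq> f ` topspace Xt \<and> openin Xt {x \<in> topspace Xt. f x \<in> S}"
    moreover have "{x \<in> topspace Xt. f x \<in> \<Union>\<K>} = (\<Union>S\<in>\<K>. {x \<in> topspace Xt. f x \<in> S})"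
      by auto
    ultimately show "\<Union>\<K> \<subseteq> f ` topspace Xt \<and> openin Xt {x \<in> topspace Xt. f x \<in> \<Union>\<K>}"
      by auto
  qed
  then show ?thesis
    unfolding quotient_topology_def by simp
qed

lemma topspace_quotient_topology: "topspace (quotient_topology Xt f) = f ` topspace Xt"
proof (rule antisym)
  show "topspace (quotient_topology Xt f) \<subseteq> f ` topspace Xt"
    using openin_topspace[of "quotient_topology Xt f"] unfolding openin_quotient_topology ..
  have "{x \<in> topspace Xt. f x \<in> f ` topspace Xt} = topspace Xt" by auto
  then have "openin (quotient_topology Xt f) (f ` topspace Xt)"
    unfolding openin_quotient_topology by simp
  then show "f ` topspace Xt \<subseteq> topspace (quotient_topology Xt f)"
    by (rule openin_subset)
qed

lemma quotient_map_quotient_topology: "quotient_map Xt (quotient_topology Xt f) f"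
  unfolding quotient_map_def topspace_quotient_topology openin_quotient_topology by simp

lemma closure_of_preimage_open_map:
  assumes "continuous_map Xt Yt f" "open_map Xt Yt f"
  shows "Xt closure_of {x \<in> topspace Xt. f x \<in> S} = {x \<in> topspace Xt. f x \<in> Yt closure_of S}"
proof
  show "Xt closure_of {x \<in> topspace Xt. f x \<in> S} \<subseteq> {x \<in> topspace Xt. f x \<in> Yt closure_of S}"
    using assms(1) by (rule continuous_map_closure_preimage_subset)
  show "{x \<in> topspace Xt. f x \<in> Yt closure_of S} \<subseteq> Xt closure_of {x \<in> topspace Xt. f x \<in> S}"
  proof
    fix x assume x: "x \<in> {x \<in> topspace Xt. f x \<in> Yt closure_of S}"
    show "x \<in> Xt closure_of {x \<in> topspace Xt. f x \<in> S}"
      unfolding in_closure_of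
    proof (intro conjI allI impI)
      fix U assume U: "x \<in> U \<and> openin Xt U"
      then have "openin Yt (f ` U)"
        using assms(2) by (simp add: open_map_def)
      then obtain y where "y \<in> U" "f y \<in> S"
        using x U unfolding in_closure_of by blast
      then show "\<exists>y. y \<in> {x \<in> topspace Xt. f x \<in> S} \<and> y \<in> U"
        using openin_subset U by blast
    qed (use x in simp)
  qed
qed

lemma continuous_map_if_clopen:
  assumes "openin Xt H" "closedin Xt H"
    "continuous_map (subtopology Xt H) Yt f" "continuous_map (subtopology Xt (topspace Xt - H)) Yt g"
  shows "continuous_map Xt Yt (\<lambda>x. if x \<in> H then f x else g x)"
proof (rule continuous_map_cases)
  have "Xt closure_of {x. x \<notin> H} = Xt closure_of (topspace Xt - H)"
    by (metis Collect_mem_eq Diff_eq closure_of_restrict Collect_neg_eq)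
  also have "\<dots> = topspace Xt - H"
    using assms(1) by (simp add: closure_of_closedin closedin_diff)
  finally have "Xt closure_of {x. x \<notin> H} = topspace Xt - H" .
  moreover have "Xt closure_of {x. x \<in> H} = H"
    using assms(2) by (simp add: closure_of_closedin)
  ultimately show "continuous_map (subtopology Xt (Xt closure_of {x. x \<in> H})) Yt f"
    "continuous_map (subtopology Xt (Xt closure_of {x. x \<notin> H})) Yt g"
    using assms(3,4) by simp_all
  have "Xt frontier_of {x. x \<in> H} = {}"
    using assms(1,2) by (simp add: frontier_of_def interior_of_openin closure_of_closedin)
  then show "\<And>x. x \<in> Xt frontier_of {x. x \<in> H} \<Longrightarrow> f x = g x" by simp
qed

lemma continuous_map_suminf:
  fixes f :: "nat \<Rightarrow> 'a \<Rightarrow> 'b::banach"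
  assumes "\<And>n. continuous_map Xt euclidean (f n)"
    and "\<And>n x. x \<in> topspace Xt \<Longrightarrow> norm (f n x) \<le> M n" and "summable M"
  shows "continuous_map Xt euclidean (\<lambda>x. suminf (\<lambda>n. f n x))"
proof -
  have lim: "uniform_limit (topspace Xt) (\<lambda>n x. \<Sum>i<n. f i x) (\<lambda>x. suminf (\<lambda>i. f i x)) sequentially"
    using assms(2,3) by (rule Weierstrass_m_test)
  have "continuous_map Xt Met_TC.mtopology (\<lambda>x. suminf (\<lambda>i. f i x))"
  proof (rule Met_TC.continuous_map_uniform_limit)
    show "\<forall>\<^sub>F n in sequentially. continuous_map Xt Met_TC.mtopology (\<lambda>x. \<Sum>i<n. f i x)"
      using assms(1) by (simp add: continuous_map_sum)
    show "\<forall>\<^sub>F n in sequentially. \<forall>x\<in>topspace Xt. suminf (\<lambda>i. f i x) \<in> UNIV \<and>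
        dist (\<Sum>i<n. f i x) (suminf (\<lambda>i. f i x)) < e" if "0 < e" for e
      using uniform_limitD[OF lim that] by simp
  qed simp
  then show ?thesis by simp
qed

lemma cozero_set_subset: "cozero_set Xt S \<Longrightarrow> S \<subseteq> topspace Xt"
  unfolding cozero_set_def by auto

lemma openin_cozero_set:
  assumes "cozero_set Xt S" shows "openin Xt S"
proof -
  obtain g where "continuous_map Xt euclideanreal g" "S = {x \<in> topspace Xt. g x \<in> - {0}}"
    using assms unfolding cozero_set_def by auto
  moreover have "openin euclideanreal (- {0})"
    by auto
  ultimately show ?thesis
    using openin_continuous_map_preimage by metis
qed

lemma cozero_set_preimage:
  assumes "continuous_map Xt Yt f" "cozero_set Yt S"
  shows "cozero_set Xt {x \<in> topspace Xt. f x \<in> S}"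
proof -
  obtain g where g: "continuous_map Yt euclideanreal g" "S = {y \<in> topspace Yt. g y \<noteq> 0}"
    using assms(2) unfolding cozero_set_def by blast
  have "{x \<in> topspace Xt. f x \<in> S} = {x \<in> topspace Xt. (g \<circ> f) x \<noteq> 0}"
    using g(2) continuous_map_image_subset_topspace[OF assms(1)] by auto
  then show ?thesis
    unfolding cozero_set_def using continuous_map_compose[OF assms(1) g(1)] by blast
qed

lemma cozero_set_Int:
  assumes "cozero_set Xt S" "cozero_set Xt R" shows "cozero_set Xt (S \<inter> R)"
proof -
  obtain g h where "continuous_map Xt euclideanreal g" "S = {x \<in> topspace Xt. g x \<noteq> 0}"
    "continuous_map Xt euclideanreal h" "R = {x \<in> topspace Xt. h x \<noteq> 0}"
    using assms unfolding cozero_set_def by blast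
  moreover from this have "S \<inter> R = {x \<in> topspace Xt. g x * h x \<noteq> 0}" by auto
  moreover have "continuous_map Xt euclideanreal (\<lambda>x. g x * h x)"
    using calculation by (intro continuous_intros) auto
  ultimately show ?thesis
    unfolding cozero_set_def by blast
qed

lemma cozero_set_clopen:
  assumes "openin Xt S" "closedin Xt S" shows "cozero_set Xt S"
proof -
  have "continuous_map Xt euclideanreal (\<lambda>x. if x \<in> S then 1 else 0)"
    using assms by (intro continuous_map_if_clopen) auto
  moreover have "S = {x \<in> topspace Xt. (if x \<in> S then 1 else 0::real) \<noteq> 0}"
    using closedin_subset[OF assms(2)] by auto
  ultimately show ?thesis
    unfolding cozero_set_def by blast
qed

lemma cozero_set_Union:
  assumes "countable \<U>" "\<And>U. U \<in> \<U> \<Longrightarrow> cozero_set Xt U"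
  shows "cozero_set Xt (\<Union>\<U>)"
proof (cases "\<U> = {}")
  case True
  then show ?thesis
    unfolding cozero_set_def by (intro exI[of _ "\<lambda>x. 0"]) auto
next
  case False
  have "\<forall>n. \<exists>g. continuous_map Xt euclideanreal g \<and>
      from_nat_into \<U> n = {x \<in> topspace Xt. g x \<noteq> 0}"
    using assms(2) from_nat_into[OF False] unfolding cozero_set_def by blast
  then obtain g where g: "\<And>n. continuous_map Xt euclideanreal (g n)"
    and g0: "\<And>n. from_nat_into \<U> n = {x \<in> topspace Xt. g n x \<noteq> 0}"
    by metis
  define h where "h n x = (1/2) ^ n * min 1 \<bar>g n x\<bar>" for n x
  have h: "0 \<le> h n x" "norm (h n x) \<le> (1/2) ^ n" for n x
    unfolding h_def using mult_left_le[of "min 1 \<bar>g n x\<bar>" "(1/2::real) ^ n"] by auto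
  have geometric: "summable (\<lambda>n. (1/2::real) ^ n)"
    by (rule summable_geometric) simp
  have "continuous_map Xt euclideanreal (h n)" for n
    unfolding h_def by (intro continuous_intros g)
  then have cont: "continuous_map Xt euclideanreal (\<lambda>x. suminf (\<lambda>n. h n x))"
    using h(2) geometric by (rule continuous_map_suminf)
  have "suminf (\<lambda>n. h n x) \<noteq> 0 \<longleftrightarrow> (\<exists>n. x \<in> from_nat_into \<U> n)"
    if "x \<in> topspace Xt" for x
  proof -
    have "summable (\<lambda>n. h n x)"
      using geometric h(2) by (rule summable_comparison_test')
    then have "suminf (\<lambda>n. h n x) = 0 \<longleftrightarrow> (\<forall>n. h n x = 0)"
      using h(1) by (rule suminf_eq_zero_iff)
    then show ?thesis
      using that by (auto simp: h_def g0 min_def)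
  qed
  moreover have "\<Union>\<U> = (\<Union>n. from_nat_into \<U> n)"
    using assms(1) False by (simp add: range_from_nat_into)
  moreover have "from_nat_into \<U> n \<subseteq> topspace Xt" for n
    unfolding g0 by blast
  ultimately have "\<Union>\<U> = {x \<in> topspace Xt. suminf (\<lambda>n. h n x) \<noteq> 0}"
    by blast
  with cont show ?thesis
    unfolding cozero_set_def by blast
qed

lemma cozero_set_Un:
  "cozero_set Xt S \<Longrightarrow> cozero_set Xt R \<Longrightarrow> cozero_set Xt (S \<union> R)"
  using cozero_set_Union[of "{S, R}" Xt] by auto

lemma completely_regular_cozero_set_nbhd:
  assumes "completely_regular_space Xt" "openin Xt U" "x \<in> U"
  obtains S where "cozero_set Xt S" "x \<in> S" "S \<subseteq> U"
proof -
  obtain f where f: "continuous_map Xt euclideanreal f" "f x = 0" "f ` (topspace Xt - U) \<subseteq> {1}"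
    using assms unfolding completely_regular_space_alt' by blast
  let ?S = "{y \<in> topspace Xt. 1 - f y \<noteq> 0}"
  have "continuous_map Xt euclideanreal (\<lambda>y. 1 - f y)"
    using f(1) by (intro continuous_intros)
  then have "cozero_set Xt ?S"
    unfolding cozero_set_def by blast
  moreover have "x \<in> ?S"
    using f(2) assms(2,3) openin_subset by fastforce
  moreover have "?S \<subseteq> U"
    using f(3) by auto
  ultimately show ?thesis using that by blast
qed

lemma basically_disconnected_clopen_subtopology:
  assumes "basically_disconnected Xt" "openin Xt H" "closedin Xt H"
  shows "basically_disconnected (subtopology Xt H)"
  unfolding basically_disconnected_def
proof (intro allI impI)
  fix C assume "cozero_set (subtopology Xt H) C"
  then obtain g where g: "continuous_map (subtopology Xt H) euclideanreal g"
    and C: "C = {x \<in> topspace (subtopology Xt H). g x \<noteq> 0}"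
    unfolding cozero_set_def by blast
  have "continuous_map Xt euclideanreal (\<lambda>x. if x \<in> H then g x else 0)"
    using assms(2,3) g by (intro continuous_map_if_clopen) auto
  moreover have "C = {x \<in> topspace Xt. (if x \<in> H then g x else 0) \<noteq> 0}"
    using C by auto
  ultimately have "openin Xt (Xt closure_of C)"
    using assms(1) unfolding basically_disconnected_def cozero_set_def by blast
  moreover have "C \<subseteq> H"
    using C by auto
  then have "Xt closure_of C \<subseteq> H"
    using assms(3) by (rule closure_of_minimal)
  then have "subtopology Xt H closure_of C = Xt closure_of C"
    using \<open>C \<subseteq> H\<close> by (simp add: closure_of_subtopology Int_absorb1 Int_absorb2)
  ultimately show "openin (subtopology Xt H) (subtopology Xt H closure_of C)"
    by (metis openin_subtopology_Int2 inf.absorb_iff2 \<open>Xt closure_of C \<subseteq> H\<close>)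
qed

lemma basically_disconnected_open_quotient:
  assumes "basically_disconnected Xt" "continuous_map Xt Yt f" "open_map Xt Yt f"
    "f ` topspace Xt = topspace Yt"
  shows "basically_disconnected Yt"
  unfolding basically_disconnected_def
proof (intro allI impI)
  fix C assume "cozero_set Yt C"
  then have "cozero_set Xt {x \<in> topspace Xt. f x \<in> C}"
    using assms(2) by (intro cozero_set_preimage)
  then have "openin Xt {x \<in> topspace Xt. f x \<in> Yt closure_of C}"
    using assms(1) closure_of_preimage_open_map[OF assms(2,3)]
    unfolding basically_disconnected_def by metis
  moreover have "quotient_map Xt Yt f"
    using assms(2-4) by (rule continuous_open_imp_quotient_map)
  ultimately show "openin Yt (Yt closure_of C)"
    by (simp add: quotient_map_def closure_of_subset_topspace)
qed

lemma involution_closure_of: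
  assumes "continuous_map Xt Xt \<sigma>" "\<And>x. x \<in> topspace Xt \<Longrightarrow> \<sigma> (\<sigma> x) = x"
    and "x \<in> Xt closure_of S"
  shows "\<sigma> x \<in> Xt closure_of {y \<in> topspace Xt. \<sigma> y \<in> S}"
proof -
  have "{y \<in> topspace Xt. \<sigma> y \<in> {z \<in> topspace Xt. \<sigma> z \<in> S}} = topspace Xt \<inter> S"
    using assms(1,2) by (auto simp: continuous_map_def)
  then have "Xt closure_of S \<subseteq> {y \<in> topspace Xt. \<sigma> y \<in> Xt closure_of {z \<in> topspace Xt. \<sigma> z \<in> S}}"
    using continuous_map_closure_preimage_subset[OF assms(1), of "{z \<in> topspace Xt. \<sigma> z \<in> S}"]
    by (simp add: closure_of_restrict[symmetric])
  then show ?thesis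
    using assms(3) by blast
qed

lemma basically_disconnected_involution_separation:
  fixes U :: "nat \<Rightarrow> 'a set"
  assumes BD: "basically_disconnected Xt"
    and \<sigma>: "continuous_map Xt Xt \<sigma>" "\<And>x. x \<in> topspace Xt \<Longrightarrow> \<sigma> (\<sigma> x) = x"
    and U: "\<And>n. cozero_set Xt (U n)" "\<And>n x. x \<in> U n \<Longrightarrow> \<sigma> x \<notin> U n"
  obtains C where "cozero_set Xt C" "\<And>x. x \<in> C \<Longrightarrow> \<sigma> x \<notin> C"
    "(\<Union>n. U n) \<subseteq> Xt closure_of (C \<union> {x \<in> topspace Xt. \<sigma> x \<in> C})"
proof -
  define pre where "pre S = {x \<in> topspace Xt. \<sigma> x \<in> S}" for S
  define F where "F n = (\<Union>m<n. U m \<union> pre (U m))" for n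
  define V where "V n = U n - Xt closure_of F n" for n
  define C where "C = (\<Union>n. V n)"
  have Utop: "U n \<subseteq> topspace Xt" for n
    using U(1) by (rule cozero_set_subset)
  have Fsub: "U m \<union> pre (U m) \<subseteq> F n" if "m < n" for m n
    using that unfolding F_def by blast
  have Fcl: "F n \<subseteq> Xt closure_of F n" for n
    using Utop unfolding F_def pre_def by (intro closure_of_subset) blast
  have "cozero_set Xt (F n)" for n
    unfolding F_def pre_def using U(1) cozero_set_preimage[OF \<sigma>(1) U(1)]
    by (intro cozero_set_Union) (auto intro: cozero_set_Un)
  then have "openin Xt (Xt closure_of F n)" for n
    using BD unfolding basically_disconnected_def by blast
  then have "cozero_set Xt (topspace Xt - Xt closure_of F n)" for n
    by (intro cozero_set_clopen) auto
  moreover have "V n = U n \<inter> (topspace Xt - Xt closure_of F n)" for n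
    using Utop unfolding V_def by blast
  ultimately have "cozero_set Xt (V n)" for n
    by (simp add: cozero_set_Int U(1))
  then have cozero: "cozero_set Xt C"
    unfolding C_def by (intro cozero_set_Union) auto
  have disjoint: "\<sigma> x \<notin> C" if x: "x \<in> C" for x
  proof
    assume "\<sigma> x \<in> C"
    then obtain m n where m: "\<sigma> x \<in> V m" and n: "x \<in> V n"
      using x unfolding C_def by blast
    have top: "x \<in> topspace Xt" "\<sigma> x \<in> topspace Xt"
      using m n Utop unfolding V_def by blast+
    consider "m = n" | "m < n" | "n < m" by linarith
    then show False
    proof cases
      case 1
      then show False using U(2) m n unfolding V_def by blast
    next
      case 2
      then have "x \<in> pre (U m)"
        using m top unfolding V_def pre_def by blast
      then show False
        using n Fsub[OF 2] Fcl unfolding V_def by blast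
    next
      case 3
      then have "\<sigma> x \<in> pre (U n)"
        using n top \<sigma>(2) unfolding V_def pre_def by auto
      then show False
        using m Fsub[OF 3] Fcl unfolding V_def by blast
    qed
  qed
  let ?D = "Xt closure_of (C \<union> pre C)"
  have pre_D: "pre ?D \<subseteq> ?D"
  proof
    fix y assume "y \<in> pre ?D"
    then have y: "y \<in> topspace Xt" "\<sigma> y \<in> ?D"
      unfolding pre_def by auto
    have "\<sigma> (\<sigma> y) \<in> Xt closure_of pre (C \<union> pre C)"
      using involution_closure_of[OF \<sigma> y(2)] by (simp add: pre_def)
    moreover have "pre (C \<union> pre C) \<subseteq> C \<union> pre C"
      using \<sigma>(2) unfolding pre_def by auto
    ultimately show "y \<in> ?D"
      using \<sigma>(2)[OF y(1)] closure_of_mono by fastforce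
  qed
  have "C \<subseteq> ?D"
    using Utop by (intro subset_trans[OF _ closure_of_subset]) (auto simp: C_def V_def pre_def)
  have cover: "U n \<subseteq> ?D" for n
  proof (induction n rule: less_induct)
    case (less n)
    then have "pre (U m) \<subseteq> ?D" if "m < n" for m
      using that pre_D unfolding pre_def by blast
    then have "F n \<subseteq> ?D"
      using less unfolding F_def by blast
    then have "Xt closure_of F n \<subseteq> ?D"
      by (rule closure_of_minimal) (rule closedin_closure_of)
    moreover have "V n \<subseteq> ?D"
      using \<open>C \<subseteq> ?D\<close> unfolding C_def by blast
    ultimately show ?case
      unfolding V_def by blast
  qed
  show ?thesis
  proof (rule that[OF cozero disjoint])
    show "(\<Union>n. U n) \<subseteq> Xt closure_of (C \<union> {x \<in> topspace Xt. \<sigma> x \<in> C})"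
      using cover unfolding pre_def by blast
  qed
qed

lemma basically_disconnected_fixpoint_notin_closure:
  assumes BD: "basically_disconnected Xt" and CR: "completely_regular_space Xt"
    and HS: "Hausdorff_space Xt"
    and \<sigma>: "continuous_map Xt Xt \<sigma>" "\<And>x. x \<in> topspace Xt \<Longrightarrow> \<sigma> (\<sigma> x) = x"
    and A: "Lindelof_space (subtopology Xt A)" "A \<subseteq> topspace Xt" "\<And>x. x \<in> A \<Longrightarrow> \<sigma> x \<noteq> x"
    and z: "\<sigma> z = z"
  shows "z \<notin> Xt closure_of A"
proof
  assume zA: "z \<in> Xt closure_of A"
  define pre where "pre S = {x \<in> topspace Xt. \<sigma> x \<in> S}" for S
  let ?\<U> = "{U. cozero_set Xt U \<and> (\<forall>x\<in>U. \<sigma> x \<notin> U)}"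
  have "A \<subseteq> \<Union>?\<U>"
  proof
    fix x assume x: "x \<in> A"
    then have "x \<in> topspace Xt" "\<sigma> x \<in> topspace Xt" "x \<noteq> \<sigma> x"
      using A(2,3) continuous_map_image_subset_topspace[OF \<sigma>(1)] by force+
    then obtain P R where PR: "openin Xt P" "openin Xt R" "x \<in> P" "\<sigma> x \<in> R" "disjnt P R"
      using HS unfolding Hausdorff_space_def by metis
    have "openin Xt (P \<inter> pre R)"
      unfolding pre_def using PR(1,2) openin_continuous_map_preimage[OF \<sigma>(1)] by blast
    moreover have "x \<in> P \<inter> pre R"
      unfolding pre_def using PR(3,4) \<open>x \<in> topspace Xt\<close> by blast
    ultimately obtain S where S: "cozero_set Xt S" "x \<in> S" "S \<subseteq> P \<inter> pre R"
      by (rule completely_regular_cozero_set_nbhd[OF CR])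
    have "\<sigma> u \<notin> S" if "u \<in> S" for u
      using S(3) PR(5) that unfolding pre_def disjnt_def by blast
    then show "x \<in> \<Union>?\<U>"
      using S by blast
  qed
  moreover have "\<forall>U\<in>?\<U>. openin Xt U"
    using openin_cozero_set by blast
  ultimately obtain \<V> where \<V>: "countable \<V>" "\<V> \<subseteq> ?\<U>" "A \<subseteq> \<Union>\<V>"
    using A(1) unfolding Lindelof_space_subtopology_subset[OF A(2)] by meson
  then have "\<V> \<noteq> {}"
    using zA by auto
  define U where "U = from_nat_into \<V>"
  have "range U = \<V>"
    unfolding U_def using \<V>(1) \<open>\<V> \<noteq> {}\<close> by (simp add: range_from_nat_into)
  then have "cozero_set Xt (U n)" "\<And>x. x \<in> U n \<Longrightarrow> \<sigma> x \<notin> U n" for n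
    using \<V>(2) by auto
  then obtain C where C: "cozero_set Xt C" "\<And>x. x \<in> C \<Longrightarrow> \<sigma> x \<notin> C"
    and cover: "(\<Union>n. U n) \<subseteq> Xt closure_of (C \<union> pre C)"
    using basically_disconnected_involution_separation[OF BD \<sigma>] unfolding pre_def by blast
  have "Xt closure_of A \<subseteq> Xt closure_of (C \<union> pre C)"
    using \<V>(3) cover \<open>range U = \<V>\<close> by (intro closure_of_minimal) auto
  then have "z \<in> Xt closure_of C \<or> z \<in> Xt closure_of pre C"
    using zA by auto
  moreover have "z \<in> Xt closure_of pre C" if "z \<in> Xt closure_of C"
    using involution_closure_of[OF \<sigma> that] z unfolding pre_def by simp
  moreover have "z \<in> Xt closure_of C" if "z \<in> Xt closure_of pre C"
  proof -
    have "pre (pre C) \<subseteq> C"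
      using \<sigma>(2) unfolding pre_def by auto
    then show ?thesis
      using involution_closure_of[OF \<sigma> that] closure_of_mono z unfolding pre_def by fastforce
  qed
  moreover have "Xt closure_of C \<inter> Xt closure_of pre C = {}"
  proof -
    have "openin Xt (Xt closure_of C)"
      using BD C(1) unfolding basically_disconnected_def by blast
    moreover have "openin Xt (pre C)"
      unfolding pre_def using openin_continuous_map_preimage[OF \<sigma>(1) openin_cozero_set[OF C(1)]] .
    moreover have "pre C \<inter> C = {}"
      using C(2) unfolding pre_def by blast
    ultimately show ?thesis
      by (metis inf_commute openin_Int_closure_of_eq_empty)
  qed
  ultimately show False
    by blast
qed

lemma continuous_map_prod_nbhds:
  assumes "continuous_map (prod_topology Xt Yt) Zt f" "openin Zt W" "f (a, b) \<in> W"
    and "a \<in> topspace Xt" "b \<in> topspace Yt"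
  obtains U V where "openin Xt U" "openin Yt V" "a \<in> U" "b \<in> V"
    "\<And>u v. u \<in> U \<Longrightarrow> v \<in> V \<Longrightarrow> f (u, v) \<in> W"
proof -
  have "openin (prod_topology Xt Yt) {p \<in> topspace (prod_topology Xt Yt). f p \<in> W}"
    using assms(1,2) by (rule openin_continuous_map_preimage)
  moreover have "(a, b) \<in> {p \<in> topspace (prod_topology Xt Yt). f p \<in> W}"
    using assms(3-5) by simp
  ultimately obtain U V where "openin Xt U" "openin Yt V" "a \<in> U" "b \<in> V"
    "U \<times> V \<subseteq> {p \<in> topspace (prod_topology Xt Yt). f p \<in> W}"
    unfolding openin_prod_topology_alt by meson
  then show ?thesis
    using that by blast
qed

lemma (in group) involutions_commute:
  assumes "a \<in> carrier G" "b \<in> carrier G"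
    and "a \<otimes> a = \<one>" "b \<otimes> b = \<one>" "(a \<otimes> b) \<otimes> (a \<otimes> b) = \<one>"
  shows "a \<otimes> b = b \<otimes> a"
proof -
  have "inv a = a" "inv b = b" "inv (a \<otimes> b) = a \<otimes> b"
    using assms inv_equality by auto
  then show ?thesis
    using inv_mult_group[OF assms(1,2)] by simp
qed

lemma (in group) subgroup_centralizer:
  assumes "A \<subseteq> carrier G"
  shows "subgroup {x \<in> carrier G. \<forall>a\<in>A. x \<otimes> a = a \<otimes> x} G"
proof (rule subgroupI)
  fix x assume x: "x \<in> {x \<in> carrier G. \<forall>a\<in>A. x \<otimes> a = a \<otimes> x}"
  show "inv x \<in> {x \<in> carrier G. \<forall>a\<in>A. x \<otimes> a = a \<otimes> x}"
  proof (intro CollectI conjI ballI)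
    fix a assume "a \<in> A"
    then have a: "a \<in> carrier G" "x \<otimes> a = a \<otimes> x" and "x \<in> carrier G"
      using assms x by auto
    then have "x \<otimes> (a \<otimes> inv x) = a"
      by (simp add: m_assoc[symmetric]) (simp add: m_assoc)
    then show "inv x \<otimes> a = a \<otimes> inv x"
      using a \<open>x \<in> carrier G\<close> by (simp add: inv_solve_left')
  qed (use x in simp)
next
  fix x y
  assume x: "x \<in> {x \<in> carrier G. \<forall>a\<in>A. x \<otimes> a = a \<otimes> x}"
    and y: "y \<in> {x \<in> carrier G. \<forall>a\<in>A. x \<otimes> a = a \<otimes> x}"
  show "x \<otimes> y \<in> {x \<in> carrier G. \<forall>a\<in>A. x \<otimes> a = a \<otimes> x}"
  proof (intro CollectI conjI ballI)
    fix a assume "a \<in> A"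
    then have "a \<in> carrier G" "x \<otimes> a = a \<otimes> x" "y \<otimes> a = a \<otimes> y"
      using assms x y by auto
    then show "x \<otimes> y \<otimes> a = a \<otimes> (x \<otimes> y)"
      using x y by (simp add: m_assoc) (simp add: m_assoc[symmetric])
  qed (use x y in simp)
qed (use assms in \<open>auto intro!: exI[where x = \<one>]\<close>)

lemma (in group) generate_commuting:
  assumes "S \<subseteq> carrier G" "\<And>a b. a \<in> S \<Longrightarrow> b \<in> S \<Longrightarrow> a \<otimes> b = b \<otimes> a"
    and "x \<in> generate G S" "y \<in> generate G S"
  shows "x \<otimes> y = y \<otimes> x"
proof -
  have "S \<subseteq> {x \<in> carrier G. \<forall>a\<in>S. x \<otimes> a = a \<otimes> x}"
    using assms(1,2) by auto
  then have "generate G S \<subseteq> {x \<in> carrier G. \<forall>a\<in>S. x \<otimes> a = a \<otimes> x}"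
    by (rule generate_subgroup_incl[OF _ subgroup_centralizer[OF assms(1)]])
  then have "S \<subseteq> {x \<in> carrier G. \<forall>a\<in>generate G S. x \<otimes> a = a \<otimes> x}"
    using assms(1) by auto
  then have "generate G S \<subseteq> {x \<in> carrier G. \<forall>a\<in>generate G S. x \<otimes> a = a \<otimes> x}"
    by (rule generate_subgroup_incl[OF _ subgroup_centralizer[OF generate_incl[OF assms(1)]]])
  then show ?thesis
    using assms(3,4) by blast
qed

lemma (in group) boolean_group_generate:
  assumes "S \<subseteq> carrier G" "\<And>a b. a \<in> S \<Longrightarrow> b \<in> S \<Longrightarrow> a \<otimes> b = b \<otimes> a"
    and "\<And>a. a \<in> S \<Longrightarrow> a \<otimes> a = \<one>"
  shows "boolean_group (G\<lparr>carrier := generate G S\<rparr>)"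
  unfolding boolean_group_def
proof (simp, intro ballI)
  fix x assume "x \<in> generate G S"
  then show "x \<otimes> x = \<one>"
  proof (induction rule: generate.induct)
    case one
    then show ?case by simp
  next
    case (incl h)
    then show ?case by (rule assms(3))
  next
    case (inv h)
    then have "inv h \<otimes> inv h = inv (h \<otimes> h)"
      using assms(1) by (simp add: inv_mult_group subset_iff)
    then show ?case
      using inv assms(3) by simp
  next
    case (eng h1 h2)
    then have "h1 \<in> carrier G" "h2 \<in> carrier G" "h2 \<otimes> h1 = h1 \<otimes> h2"
      using generate_incl[OF assms(1)] generate_commuting[OF assms(1,2)] by auto
    then have "h1 \<otimes> h2 \<otimes> (h1 \<otimes> h2) = (h1 \<otimes> h1) \<otimes> (h2 \<otimes> h2)"
      by (simp add: m_assoc) (simp add: m_assoc[symmetric])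
    then show ?case
      using eng.IH by simp
  qed
qed

lemma (in group_hom) subgroup_vimage:
  assumes "subgroup K H"
  shows "subgroup {x \<in> carrier G. h x \<in> K} G"
  using assms by (auto intro!: subgroup.intro simp: subgroup.m_closed subgroup.m_inv_closed subgroup.one_closed)

lemma countable_closure:
  assumes "countable \<A>" "\<And>x. x \<in> \<A> \<Longrightarrow> P x"
    and "\<And>x. P x \<Longrightarrow> countable (F x)" "\<And>x y. P x \<Longrightarrow> y \<in> F x \<Longrightarrow> P y"
  obtains \<B> where "countable \<B>" "\<A> \<subseteq> \<B>" "\<And>x. x \<in> \<B> \<Longrightarrow> P x" "\<And>x. x \<in> \<B> \<Longrightarrow> F x \<subseteq> \<B>"
proof -
  define step where "step S = S \<union> \<Union>(F ` S)" for S
  define \<B> where "\<B> = (\<Union>n. (step ^^ n) \<A>)"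
  have "countable ((step ^^ n) \<A>) \<and> (\<forall>x\<in>(step ^^ n) \<A>. P x)" for n
  proof (induction n)
    case 0
    then show ?case using assms(1,2) by simp
  next
    case (Suc n)
    then show ?case
      using assms(3,4) unfolding step_def by (auto intro: countable_UN)
  qed
  then have "countable \<B>" "\<And>x. x \<in> \<B> \<Longrightarrow> P x"
    unfolding \<B>_def by auto
  moreover have "\<A> \<subseteq> \<B>"
    using UN_upper[of 0 UNIV "\<lambda>n. (step ^^ n) \<A>"] unfolding \<B>_def by simp
  moreover have "F x \<subseteq> \<B>" if x: "x \<in> \<B>" for x
  proof -
    obtain n where "x \<in> (step ^^ n) \<A>"
      using x unfolding \<B>_def by blast
    then have "F x \<subseteq> (step ^^ Suc n) \<A>"
      by (auto simp: step_def)
    then show ?thesis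
      unfolding \<B>_def by blast
  qed
  ultimately show ?thesis
    using that by blast
qed

locale top_group = group G for G :: "('a, 'b) monoid_scheme" (structure) +
  fixes T :: "'a topology"
  assumes topspace_eq: "topspace T = carrier G"
    and continuous_mult: "continuous_map (prod_topology T T) T (\<lambda>p. fst p \<otimes> snd p)"
    and continuous_inv: "continuous_map T T (\<lambda>x. inv x)"

lemma top_groupI: "topological_group G T \<Longrightarrow> top_group G T"
  unfolding topological_group_def top_group_def top_group_axioms_def by auto

context top_group
begin

lemma continuous_map_group_mult [continuous_intros]:
  "continuous_map Zt T f \<Longrightarrow> continuous_map Zt T g \<Longrightarrow> continuous_map Zt T (\<lambda>x. f x \<otimes> g x)"
  using continuous_map_compose[OF continuous_map_pairedI continuous_mult] by (simp add: o_def)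

lemma continuous_map_group_inv [continuous_intros]:
  "continuous_map Zt T f \<Longrightarrow> continuous_map Zt T (\<lambda>x. inv (f x))"
  using continuous_map_compose[OF _ continuous_inv] by (simp add: o_def)

lemma continuous_map_group_const [continuous_intros]:
  "a \<in> carrier G \<Longrightarrow> continuous_map Zt T (\<lambda>x. a)"
  by (simp add: topspace_eq)

lemma openin_group_preimage:
  "continuous_map T T f \<Longrightarrow> openin T U \<Longrightarrow> openin T {x \<in> carrier G. f x \<in> U}"
  using openin_continuous_map_preimage topspace_eq by fastforce

lemma closedin_group_preimage:
  "continuous_map T T f \<Longrightarrow> closedin T U \<Longrightarrow> closedin T {x \<in> carrier G. f x \<in> U}"
  using closedin_continuous_map_preimage topspace_eq by fastforce

lemma openin_subset_carrier: "openin T U \<Longrightarrow> U \<subseteq> carrier G"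
  using openin_subset topspace_eq by blast

lemma nbhd_of_one_mult:
  assumes "continuous_map (prod_topology T T) T \<phi>" "openin T W" "\<phi> (\<one>, \<one>) \<in> W"
  obtains V where "openin T V" "\<one> \<in> V" "\<And>u v. u \<in> V \<Longrightarrow> v \<in> V \<Longrightarrow> \<phi> (u, v) \<in> W"
proof -
  obtain U V where "openin T U" "openin T V" "\<one> \<in> U" "\<one> \<in> V"
    "\<And>u v. u \<in> U \<Longrightarrow> v \<in> V \<Longrightarrow> \<phi> (u, v) \<in> W"
    using continuous_map_prod_nbhds[OF assms] topspace_eq by auto
  then show ?thesis
    using that[of "U \<inter> V"] by blast
qed

lemma openin_translate:
  "openin T V \<Longrightarrow> a \<in> carrier G \<Longrightarrow> openin T {x \<in> carrier G. a \<otimes> x \<in> V}"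
  by (intro openin_group_preimage continuous_map_group_mult continuous_map_group_const)
     (auto intro: continuous_map_id)

lemma regular_space: "regular_space T"
  unfolding regular_space
proof (intro allI impI)
  fix C a assume "closedin T C \<and> a \<in> topspace T - C"
  then have C: "closedin T C" and a: "a \<in> carrier G" "a \<notin> C"
    using topspace_eq by auto
  let ?W = "topspace T - C"
  have "continuous_map (prod_topology T T) T (\<lambda>p. a \<otimes> (fst p \<otimes> inv (snd p)))"
    using a(1) by (intro continuous_intros continuous_map_fst continuous_map_snd)
  moreover have "openin T ?W"
    using C by blast
  moreover have "a \<otimes> (fst (\<one>, \<one>) \<otimes> inv (snd (\<one>, \<one>))) \<in> ?W"
    using a topspace_eq by simp
  ultimately obtain V where V: "openin T V" "\<one> \<in> V"
    and VW: "\<And>u v. u \<in> V \<Longrightarrow> v \<in> V \<Longrightarrow> a \<otimes> (u \<otimes> inv v) \<in> ?W"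
    by (rule nbhd_of_one_mult) auto
  let ?U = "{x \<in> carrier G. inv a \<otimes> x \<in> V}"
  have "T closure_of ?U \<subseteq> ?W"
  proof
    fix y assume y: "y \<in> T closure_of ?U"
    then have "y \<in> carrier G"
      using closure_of_subset_topspace topspace_eq by fastforce
    then have "openin T {z \<in> carrier G. inv y \<otimes> z \<in> V}" "y \<in> {z \<in> carrier G. inv y \<otimes> z \<in> V}"
      using openin_translate[OF V(1)] V(2) by simp_all
    then obtain z where z: "z \<in> ?U" "z \<in> {z \<in> carrier G. inv y \<otimes> z \<in> V}"
      using y unfolding in_closure_of by meson
    then have "a \<otimes> ((inv a \<otimes> z) \<otimes> inv (inv y \<otimes> z)) \<in> ?W"
      using VW by simp
    moreover have "a \<otimes> ((inv a \<otimes> z) \<otimes> inv (inv y \<otimes> z)) = y"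
      using a(1) z \<open>y \<in> carrier G\<close> by (simp add: inv_mult_group m_assoc[symmetric])
    ultimately show "y \<in> ?W"
      by simp
  qed
  moreover have "openin T ?U" "a \<in> ?U"
    using openin_translate[OF V(1)] V(2) a(1) by simp_all
  ultimately show "\<exists>U. openin T U \<and> a \<in> U \<and> disjnt C (T closure_of U)"
    by (auto simp: disjnt_def)
qed

lemma clopen_subgroup:
  assumes "subgroup K G" "openin T V" "\<one> \<in> V" "V \<subseteq> K"
  shows "openin T K" "closedin T K"
proof -
  interpret K: subgroup K G by (rule assms(1))
  have nbhd: "x \<in> {z \<in> carrier G. inv x \<otimes> z \<in> V}" "openin T {z \<in> carrier G. inv x \<otimes> z \<in> V}"
    if "x \<in> carrier G" for x
    using that openin_translate[OF assms(2)] assms(3) by simp_all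
  have translate: "x \<otimes> (inv x \<otimes> z) = z" if "x \<in> carrier G" "z \<in> carrier G" for x z
    using that by (simp add: m_assoc[symmetric])
  show "openin T K"
  proof (subst openin_subopen, intro ballI)
    fix x assume "x \<in> K"
    then have x: "x \<in> carrier G"
      by (rule K.mem_carrier)
    have "{z \<in> carrier G. inv x \<otimes> z \<in> V} \<subseteq> K"
    proof
      fix z assume z: "z \<in> {z \<in> carrier G. inv x \<otimes> z \<in> V}"
      then have "inv x \<otimes> z \<in> K"
        using assms(4) by blast
      then have "x \<otimes> (inv x \<otimes> z) \<in> K"
        using \<open>x \<in> K\<close> by (rule K.m_closed[rotated])
      then show "z \<in> K"
        using translate[OF x] z by simp
    qed
    then show "\<exists>U. openin T U \<and> x \<in> U \<and> U \<subseteq> K"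
      using nbhd[OF x] by blast
  qed
  show "closedin T K"
    unfolding closedin_def
  proof (intro conjI)
    show "K \<subseteq> topspace T"
      using K.subset topspace_eq by simp
    show "openin T (topspace T - K)"
    proof (subst openin_subopen, intro ballI)
    fix y assume "y \<in> topspace T - K"
    then have y: "y \<in> carrier G" "y \<notin> K"
      using topspace_eq by auto
    have "{z \<in> carrier G. inv y \<otimes> z \<in> V} \<subseteq> topspace T - K"
    proof
      fix z assume z: "z \<in> {z \<in> carrier G. inv y \<otimes> z \<in> V}"
      have "z \<notin> K"
      proof
        assume "z \<in> K"
        moreover have "inv y \<otimes> z \<in> K"
          using z assms(4) by auto
        ultimately have "z \<otimes> inv (inv y \<otimes> z) \<in> K"
          by (rule K.m_closed[OF _ K.m_inv_closed])
        moreover have "z \<otimes> inv (inv y \<otimes> z) = y"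
          using y z by (simp add: inv_mult_group m_assoc[symmetric])
        ultimately show False
          using y by simp
      qed
      then show "z \<in> topspace T - K"
        using z topspace_eq by simp
    qed
    then show "\<exists>U. openin T U \<and> y \<in> U \<and> U \<subseteq> topspace T - K"
      using nbhd y by blast
    qed
  qed
qed

lemma not_P_space_imp_nbhds_of_one:
  assumes "\<not> P_space T"
  obtains \<V> where "countable \<V>" "\<V> \<noteq> {}" "\<And>V. V \<in> \<V> \<Longrightarrow> openin T V \<and> \<one> \<in> V"
    "\<one> \<notin> T interior_of \<Inter>\<V>"
proof -
  obtain \<F> where \<F>: "countable \<F>" "\<F> \<noteq> {}" "\<And>U. U \<in> \<F> \<Longrightarrow> openin T U"
    and "\<not> openin T (\<Inter>\<F>)"
    using assms unfolding P_space_def gdelta_in_def by blast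
  then have "T interior_of \<Inter>\<F> \<noteq> \<Inter>\<F>"
    by (simp add: interior_of_eq)
  then obtain x where x: "x \<in> \<Inter>\<F>" "x \<notin> T interior_of \<Inter>\<F>"
    using interior_of_subset[of T "\<Inter>\<F>"] by blast
  have "x \<in> carrier G"
    using x(1) \<F>(2,3) openin_subset_carrier by blast
  define \<V> where "\<V> = (\<lambda>U. {y \<in> carrier G. x \<otimes> y \<in> U}) ` \<F>"
  have "\<one> \<notin> T interior_of \<Inter>\<V>"
  proof
    assume "\<one> \<in> T interior_of \<Inter>\<V>"
    then obtain W where W: "openin T W" "\<one> \<in> W" "W \<subseteq> \<Inter>\<V>"
      unfolding interior_of_def by blast
    let ?xW = "{z \<in> carrier G. inv x \<otimes> z \<in> W}"
    have "?xW \<subseteq> \<Inter>\<F>"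
    proof
      fix z assume z: "z \<in> ?xW"
      then have "x \<otimes> (inv x \<otimes> z) = z"
        using \<open>x \<in> carrier G\<close> by (simp add: m_assoc[symmetric])
      then show "z \<in> \<Inter>\<F>"
        using z W(3) unfolding \<V>_def by auto
    qed
    moreover have "openin T ?xW" "x \<in> ?xW"
      using openin_translate[OF W(1)] W(2) \<open>x \<in> carrier G\<close> by simp_all
    ultimately show False
      using x(2) unfolding interior_of_def by blast
  qed
  moreover have "openin T V \<and> \<one> \<in> V" if "V \<in> \<V>" for V
    using that x(1) openin_translate[OF \<F>(3)] \<open>x \<in> carrier G\<close> unfolding \<V>_def by auto
  ultimately show ?thesis
    using that \<F>(1,2) unfolding \<V>_def by blast
qed

lemma inv_mult_nbhd:
  assumes "openin T V" "\<one> \<in> V"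
  obtains W where "openin T W" "\<one> \<in> W" "\<And>a b. a \<in> W \<Longrightarrow> b \<in> W \<Longrightarrow> inv a \<otimes> b \<in> V"
proof -
  have "continuous_map (prod_topology T T) T (\<lambda>p. inv (fst p) \<otimes> snd p)"
    by (intro continuous_map_group_mult continuous_map_group_inv continuous_map_fst continuous_map_snd)
  moreover have "inv (fst (\<one>, \<one>)) \<otimes> snd (\<one>, \<one>) \<in> V"
    using assms(2) by simp
  ultimately obtain W where W: "openin T W" "\<one> \<in> W"
    "\<And>a b. a \<in> W \<Longrightarrow> b \<in> W \<Longrightarrow> inv (fst (a, b)) \<otimes> snd (a, b) \<in> V"
    using nbhd_of_one_mult[OF _ assms(1)] by blast
  then show ?thesis
    by (intro that) simp_all
qed

lemma conjugation_nbhds: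
  assumes "Lindelof_space T" "openin T V" "\<one> \<in> V"
  obtains \<W> where "countable \<W>" "\<And>W. W \<in> \<W> \<Longrightarrow> openin T W \<and> \<one> \<in> W"
    "\<And>g. g \<in> carrier G \<Longrightarrow> \<exists>W\<in>\<W>. \<forall>w\<in>W. g \<otimes> w \<otimes> inv g \<in> V"
proof -
  have conj: "continuous_map (prod_topology T T) T (\<lambda>p. fst p \<otimes> snd p \<otimes> inv (fst p))"
    by (intro continuous_map_group_mult continuous_map_group_inv continuous_map_fst continuous_map_snd)
  have "\<exists>U W. openin T U \<and> openin T W \<and> g \<in> U \<and> \<one> \<in> W \<and> (\<forall>u\<in>U. \<forall>w\<in>W. u \<otimes> w \<otimes> inv u \<in> V)"
    if g: "g \<in> carrier G" for g
  proof -
    have "fst (g, \<one>) \<otimes> snd (g, \<one>) \<otimes> inv (fst (g, \<one>)) \<in> V"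
      using g assms(3) by simp
    then obtain U W where "openin T U" "openin T W" "g \<in> U" "\<one> \<in> W"
      "\<And>u w. u \<in> U \<Longrightarrow> w \<in> W \<Longrightarrow> fst (u, w) \<otimes> snd (u, w) \<otimes> inv (fst (u, w)) \<in> V"
      by (rule continuous_map_prod_nbhds[OF conj assms(2)]) (use g topspace_eq in simp_all)
    then show ?thesis
      by auto
  qed
  then obtain U W where UW: "\<And>g. g \<in> carrier G \<Longrightarrow> openin T (U g) \<and> openin T (W g) \<and> g \<in> U g \<and>
      \<one> \<in> W g \<and> (\<forall>u\<in>U g. \<forall>w\<in>W g. u \<otimes> w \<otimes> inv u \<in> V)"
    by metis
  have "\<forall>U'\<in>U ` carrier G. openin T U'" "topspace T \<subseteq> \<Union>(U ` carrier G)"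
    using UW topspace_eq by auto
  then obtain \<C> where "countable \<C>" "\<C> \<subseteq> U ` carrier G" "topspace T \<subseteq> \<Union>\<C>"
    using assms(1) unfolding Lindelof_space_alt by meson
  then obtain H where H: "countable H" "H \<subseteq> carrier G" "topspace T \<subseteq> \<Union>(U ` H)"
    using countable_subset_image[of \<C> U "carrier G"] by blast
  show ?thesis
  proof (rule that[of "W ` H"])
    show "countable (W ` H)"
      using H(1) by simp
    show "openin T W' \<and> \<one> \<in> W'" if "W' \<in> W ` H" for W'
      using that H(2) UW by blast
    show "\<exists>W'\<in>W ` H. \<forall>w\<in>W'. g \<otimes> w \<otimes> inv g \<in> V" if g: "g \<in> carrier G" for g
    proof -
      obtain h where "h \<in> H" "g \<in> U h"
        using H(3) g topspace_eq by auto
      then show ?thesis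
        using UW[of h] H(2) by blast
    qed
  qed
qed

lemma invariant_nbhds_of_one:
  assumes "Lindelof_space T" "countable \<V>\<^sub>0" "\<And>V. V \<in> \<V>\<^sub>0 \<Longrightarrow> openin T V \<and> \<one> \<in> V"
  obtains \<V> where "countable \<V>" "\<V>\<^sub>0 \<subseteq> \<V>" "\<And>V. V \<in> \<V> \<Longrightarrow> openin T V \<and> \<one> \<in> V"
    "\<And>V. V \<in> \<V> \<Longrightarrow> \<exists>W\<in>\<V>. \<forall>a\<in>W. \<forall>b\<in>W. inv a \<otimes> b \<in> V"
    "\<And>V g. V \<in> \<V> \<Longrightarrow> g \<in> carrier G \<Longrightarrow> \<exists>W\<in>\<V>. \<forall>w\<in>W. g \<otimes> w \<otimes> inv g \<in> V"
proof -
  let ?nbhd = "\<lambda>V. openin T V \<and> \<one> \<in> V"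
  let ?good = "\<lambda>V \<W>. countable \<W> \<and> (\<forall>W\<in>\<W>. ?nbhd W) \<and>
      (\<exists>W\<in>\<W>. \<forall>a\<in>W. \<forall>b\<in>W. inv a \<otimes> b \<in> V) \<and>
      (\<forall>g\<in>carrier G. \<exists>W\<in>\<W>. \<forall>w\<in>W. g \<otimes> w \<otimes> inv g \<in> V)"
  have "\<exists>\<W>. ?nbhd V \<longrightarrow> ?good V \<W>" for V
  proof (cases "?nbhd V")
    case True
    obtain W where "openin T W" "\<one> \<in> W" "\<And>a b. a \<in> W \<Longrightarrow> b \<in> W \<Longrightarrow> inv a \<otimes> b \<in> V"
      using inv_mult_nbhd True by blast
    moreover obtain \<W> where "countable \<W>" "\<And>W. W \<in> \<W> \<Longrightarrow> ?nbhd W"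
      "\<And>g. g \<in> carrier G \<Longrightarrow> \<exists>W\<in>\<W>. \<forall>w\<in>W. g \<otimes> w \<otimes> inv g \<in> V"
      using conjugation_nbhds[OF assms(1)] True by blast
    ultimately have "?good V (insert W \<W>)"
      by auto
    then show ?thesis
      by blast
  qed blast
  then obtain F where F: "\<And>V. ?nbhd V \<Longrightarrow> ?good V (F V)"
    by (metis choice)
  obtain \<V> where \<V>: "countable \<V>" "\<V>\<^sub>0 \<subseteq> \<V>" "\<And>V. V \<in> \<V> \<Longrightarrow> ?nbhd V"
    "\<And>V. V \<in> \<V> \<Longrightarrow> F V \<subseteq> \<V>"
  proof (rule countable_closure[of "\<V>\<^sub>0" ?nbhd F])
    show "countable (F V)" if "?nbhd V" for V
      using F[OF that] by blast
    show "?nbhd W" if "?nbhd V" "W \<in> F V" for V W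
      using F[OF that(1)] that(2) by blast
  qed (use assms(2,3) in auto)
  show ?thesis
  proof (rule that[OF \<V>(1-3)])
    show "\<exists>W\<in>\<V>. \<forall>a\<in>W. \<forall>b\<in>W. inv a \<otimes> b \<in> V" if "V \<in> \<V>" for V
      using F[OF \<V>(3)[OF that]] \<V>(4)[OF that] by blast
    show "\<exists>W\<in>\<V>. \<forall>w\<in>W. g \<otimes> w \<otimes> inv g \<in> V" if "V \<in> \<V>" "g \<in> carrier G" for V g
      using F[OF \<V>(3)[OF that(1)]] \<V>(4)[OF that(1)] that(2) by blast
  qed
qed

lemma subgroup_Inter_nbhds:
  assumes "\<V> \<noteq> {}" "\<And>V. V \<in> \<V> \<Longrightarrow> openin T V \<and> \<one> \<in> V"
    and "\<And>V. V \<in> \<V> \<Longrightarrow> \<exists>W\<in>\<V>. \<forall>a\<in>W. \<forall>b\<in>W. inv a \<otimes> b \<in> V"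
  shows "subgroup (\<Inter>\<V>) G"
proof -
  have one: "\<one> \<in> \<Inter>\<V>"
    using assms(2) by blast
  have inv_mult: "inv a \<otimes> b \<in> \<Inter>\<V>" if ab: "a \<in> \<Inter>\<V>" "b \<in> \<Inter>\<V>" for a b
  proof
    fix V assume "V \<in> \<V>"
    then obtain W where "W \<in> \<V>" "\<forall>a\<in>W. \<forall>b\<in>W. inv a \<otimes> b \<in> V"
      using assms(3) by blast
    then show "inv a \<otimes> b \<in> V"
      using ab by blast
  qed
  have sub: "\<Inter>\<V> \<subseteq> carrier G"
    using assms(1,2) openin_subset_carrier by blast
  show ?thesis
  proof (rule subgroupI[OF sub])
    show inv: "inv a \<in> \<Inter>\<V>" if "a \<in> \<Inter>\<V>" for a
      using inv_mult[OF that one] that sub by auto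
    show "a \<otimes> b \<in> \<Inter>\<V>" if "a \<in> \<Inter>\<V>" "b \<in> \<Inter>\<V>" for a b
      using inv_mult[OF inv[OF that(1)] that(2)] that(1) sub by auto
  qed (use one in blast)
qed

lemma normal_Inter_nbhds:
  assumes "\<V> \<noteq> {}" "\<And>V. V \<in> \<V> \<Longrightarrow> openin T V \<and> \<one> \<in> V"
    and "\<And>V. V \<in> \<V> \<Longrightarrow> \<exists>W\<in>\<V>. \<forall>a\<in>W. \<forall>b\<in>W. inv a \<otimes> b \<in> V"
    and "\<And>V g. V \<in> \<V> \<Longrightarrow> g \<in> carrier G \<Longrightarrow> \<exists>W\<in>\<V>. \<forall>w\<in>W. g \<otimes> w \<otimes> inv g \<in> V"
  shows "\<Inter>\<V> \<lhd> G"
  unfolding normal_inv_iff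
proof (intro conjI ballI)
  show "subgroup (\<Inter>\<V>) G"
    using assms(1-3) by (rule subgroup_Inter_nbhds)
  fix g h assume g: "g \<in> carrier G" and h: "h \<in> \<Inter>\<V>"
  show "g \<otimes> h \<otimes> inv g \<in> \<Inter>\<V>"
  proof
    fix V assume "V \<in> \<V>"
    then obtain W where "W \<in> \<V>" "\<forall>w\<in>W. g \<otimes> w \<otimes> inv g \<in> V"
      using assms(4) g by blast
    then show "g \<otimes> h \<otimes> inv g \<in> V"
      using h by blast
  qed
qed

lemma closedin_Inter_nbhds:
  assumes "\<V> \<noteq> {}" "\<And>V. V \<in> \<V> \<Longrightarrow> openin T V \<and> \<one> \<in> V"
    and "\<And>V. V \<in> \<V> \<Longrightarrow> \<exists>W\<in>\<V>. \<forall>a\<in>W. \<forall>b\<in>W. inv a \<otimes> b \<in> V"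
  shows "closedin T (\<Inter>\<V>)"
proof -
  interpret N: subgroup "\<Inter>\<V>" G
    using assms by (rule subgroup_Inter_nbhds)
  have "T closure_of \<Inter>\<V> \<subseteq> \<Inter>\<V>"
  proof
    fix y assume y: "y \<in> T closure_of \<Inter>\<V>"
    then have "y \<in> carrier G"
      using closure_of_subset_topspace[of T "\<Inter>\<V>"] topspace_eq by auto
    show "y \<in> \<Inter>\<V>"
    proof
      fix V assume "V \<in> \<V>"
      then obtain W where W: "W \<in> \<V>" "\<forall>a\<in>W. \<forall>b\<in>W. inv a \<otimes> b \<in> V"
        using assms(3) by blast
      let ?U = "{z \<in> carrier G. inv z \<otimes> y \<in> W}"
      have "openin T ?U"
        using \<open>y \<in> carrier G\<close> W(1) assms(2)
        by (intro openin_group_preimage continuous_map_group_mult continuous_map_group_inv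
            continuous_map_group_const continuous_map_id) auto
      moreover have "y \<in> ?U"
        using \<open>y \<in> carrier G\<close> W(1) assms(2) by simp
      ultimately obtain z where z: "z \<in> \<Inter>\<V>" "z \<in> ?U"
        using y unfolding in_closure_of by meson
      then have "inv z \<in> W" "inv z \<otimes> y \<in> W"
        using W(1) N.m_inv_closed[OF z(1)] by auto
      then have "inv (inv z) \<otimes> (inv z \<otimes> y) \<in> V"
        using W(2) by blast
      moreover have "inv (inv z) \<otimes> (inv z \<otimes> y) = y"
        using z \<open>y \<in> carrier G\<close> by (simp add: m_assoc[symmetric])
      ultimately show "y \<in> V"
        by simp
    qed
  qed
  then show ?thesis
    using N.subset topspace_eq closure_of_subset_eq by metis
qed

lemma squares_near_one_in_gdelta:
  assumes L: "Lindelof_space T" and HS: "Hausdorff_space T" and BD: "basically_disconnected T"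
    and N: "gdelta_in T N" "\<one> \<in> N"
  obtains U where "openin T U" "\<one> \<in> U" "\<And>x. x \<in> U \<Longrightarrow> x \<otimes> x \<in> N"
proof -
  define A where "A = {x \<in> carrier G. x \<otimes> x \<notin> N}"
  obtain \<F> where \<F>: "countable \<F>" "\<And>U. U \<in> \<F> \<Longrightarrow> openin T U" "N = \<Inter>\<F>"
    using N(1) unfolding gdelta_in_def by blast
  have square: "continuous_map T T (\<lambda>x. x \<otimes> x)"
    by (intro continuous_map_group_mult continuous_map_id[unfolded id_def])
  have "A = \<Union>((\<lambda>U. {x \<in> carrier G. x \<otimes> x \<in> topspace T - U}) ` \<F>)"
    unfolding A_def \<F>(3) using topspace_eq by auto
  moreover have "closedin T {x \<in> carrier G. x \<otimes> x \<in> topspace T - U}" if "U \<in> \<F>" for U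
    using closedin_group_preimage[OF square] \<F>(2)[OF that] by blast
  ultimately have LA: "Lindelof_space (subtopology T A)"
    using \<F>(1) Lindelof_space_closedin_subtopology[OF L] by (auto intro: Lindelof_space_Union)
  have CR: "completely_regular_space T"
    using regular_Lindelof_imp_normal_space[OF regular_space L] HS
    by (blast intro: normal_imp_completely_regular_space)
  have no_fixpoint: "inv x \<noteq> x" if "x \<in> A" for x
  proof
    assume "inv x = x"
    then have "x \<otimes> x = \<one>"
      using that r_inv[of x] unfolding A_def by auto
    then show False
      using that N(2) unfolding A_def by simp
  qed
  have "\<one> \<notin> T closure_of A"
    by (rule basically_disconnected_fixpoint_notin_closure[OF BD CR HS continuous_inv _ LA _ no_fixpoint])
       (use topspace_eq in \<open>auto simp: A_def\<close>)
  have "A \<subseteq> T closure_of A"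
    using topspace_eq unfolding A_def by (intro closure_of_subset) auto
  show ?thesis
  proof (rule that)
    show "openin T (topspace T - T closure_of A)"
      by (rule openin_diff[OF openin_topspace closedin_closure_of])
    show "\<one> \<in> topspace T - T closure_of A"
      using \<open>\<one> \<notin> T closure_of A\<close> topspace_eq by simp
    show "x \<otimes> x \<in> N" if "x \<in> topspace T - T closure_of A" for x
      using that \<open>A \<subseteq> T closure_of A\<close> topspace_eq unfolding A_def by auto
  qed
qed


lemma not_P_space_imp_normal_Inter_nbhds:
  assumes "Lindelof_space T" "\<not> P_space T"
  obtains \<V> where "countable \<V>" "\<V> \<noteq> {}" "\<And>V. V \<in> \<V> \<Longrightarrow> openin T V \<and> \<one> \<in> V"
    "\<And>V. V \<in> \<V> \<Longrightarrow> \<exists>W\<in>\<V>. \<forall>a\<in>W. \<forall>b\<in>W. inv a \<otimes> b \<in> V"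
    "\<Inter>\<V> \<lhd> G" "closedin T (\<Inter>\<V>)" "\<not> openin T (\<Inter>\<V>)"
proof -
  obtain \<V>\<^sub>0 where \<V>\<^sub>0: "countable \<V>\<^sub>0" "\<V>\<^sub>0 \<noteq> {}" "\<And>V. V \<in> \<V>\<^sub>0 \<Longrightarrow> openin T V \<and> \<one> \<in> V"
    "\<one> \<notin> T interior_of \<Inter>\<V>\<^sub>0"
    using not_P_space_imp_nbhds_of_one[OF assms(2)] by blast
  obtain \<V> where \<V>: "countable \<V>" "\<V>\<^sub>0 \<subseteq> \<V>" "\<And>V. V \<in> \<V> \<Longrightarrow> openin T V \<and> \<one> \<in> V"
    "\<And>V. V \<in> \<V> \<Longrightarrow> \<exists>W\<in>\<V>. \<forall>a\<in>W. \<forall>b\<in>W. inv a \<otimes> b \<in> V"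
    "\<And>V g. V \<in> \<V> \<Longrightarrow> g \<in> carrier G \<Longrightarrow> \<exists>W\<in>\<V>. \<forall>w\<in>W. g \<otimes> w \<otimes> inv g \<in> V"
    using invariant_nbhds_of_one[OF assms(1) \<V>\<^sub>0(1,3)] by blast
  have "\<V> \<noteq> {}"
    using \<V>(2) \<V>\<^sub>0(2) by blast
  moreover have "\<Inter>\<V> \<lhd> G"
    using \<open>\<V> \<noteq> {}\<close> \<V>(3-5) by (rule normal_Inter_nbhds)
  moreover have "closedin T (\<Inter>\<V>)"
    using \<open>\<V> \<noteq> {}\<close> \<V>(3,4) by (rule closedin_Inter_nbhds)
  moreover have "\<not> openin T (\<Inter>\<V>)"
    using \<V>\<^sub>0(4) \<V>(2,3) interior_of_maximal[of "\<Inter>\<V>" "\<Inter>\<V>\<^sub>0" T] by blast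
  ultimately show ?thesis
    using that \<V>(1,3,4) by blast
qed
end

locale quotient_top_group = top_group G T + N: normal N G
  for G :: "('a, 'b) monoid_scheme" (structure) and T N

context quotient_top_group
begin

lemma group_hom_rcoset: "group_hom G (G Mod N) ((#>) N)"
  unfolding group_hom_def group_hom_axioms_def
  using is_group N.factorgroup_is_group N.r_coset_hom_Mod by simp

lemma rcoset_eq_iff:
  assumes "x \<in> carrier G" "y \<in> carrier G"
  shows "N #> x = N #> y \<longleftrightarrow> (\<exists>n\<in>N. y = n \<otimes> x)"
proof
  assume "N #> x = N #> y"
  then have "y \<in> N #> x"
    using repr_independenceD[OF N.subgroup_axioms assms(2)] by simp
  then show "\<exists>n\<in>N. y = n \<otimes> x"
    unfolding r_coset_def by blast
next
  assume "\<exists>n\<in>N. y = n \<otimes> x"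
  then have "y \<in> N #> x"
    unfolding r_coset_def by blast
  then show "N #> x = N #> y"
    using repr_independence[OF _ assms(1) N.subgroup_axioms] by simp
qed

lemma rcoset_eq_self_iff: "x \<in> carrier G \<Longrightarrow> N #> x = N \<longleftrightarrow> x \<in> N"
  using coset_join1[OF _ _ N.subgroup_axioms] coset_join2[OF _ N.subgroup_axioms] by blast

lemma topspace_quotient_group_topology:
  "topspace (quotient_group_topology G T N) = carrier (G Mod N)"
  unfolding quotient_group_topology_def topspace_quotient_topology carrier_FactGroup topspace_eq ..

lemma quotient_map_rcoset: "quotient_map T (quotient_group_topology G T N) ((#>) N)"
  unfolding quotient_group_topology_def by (rule quotient_map_quotient_topology)

lemma openin_quotient_group_topology:
  "U \<subseteq> carrier (G Mod N) \<Longrightarrow>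
    openin (quotient_group_topology G T N) U \<longleftrightarrow> openin T {x \<in> carrier G. N #> x \<in> U}"
  using quotient_map_rcoset topspace_quotient_group_topology topspace_eq
  unfolding quotient_map_def by simp

lemma closedin_quotient_group_topology:
  "U \<subseteq> carrier (G Mod N) \<Longrightarrow>
    closedin (quotient_group_topology G T N) U \<longleftrightarrow> closedin T {x \<in> carrier G. N #> x \<in> U}"
  using quotient_map_rcoset topspace_quotient_group_topology topspace_eq
  unfolding quotient_map_closedin by simp

lemma open_map_rcoset: "open_map T (quotient_group_topology G T N) ((#>) N)"
  unfolding open_map_def
proof (intro allI impI)
  fix S assume S: "openin T S"
  then have SG: "S \<subseteq> carrier G"
    by (rule openin_subset_carrier)
  have "{x \<in> carrier G. N #> x \<in> (#>) N ` S} = (\<Union>n\<in>N. {x \<in> carrier G. n \<otimes> x \<in> S})"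
  proof (intro equalityI subsetI)
    fix x assume "x \<in> {x \<in> carrier G. N #> x \<in> (#>) N ` S}"
    then obtain s where "x \<in> carrier G" "s \<in> S" "N #> x = N #> s"
      by blast
    then obtain n where "n \<in> N" "s = n \<otimes> x"
      using rcoset_eq_iff SG by blast
    then show "x \<in> (\<Union>n\<in>N. {x \<in> carrier G. n \<otimes> x \<in> S})"
      using \<open>x \<in> carrier G\<close> \<open>s \<in> S\<close> by blast
  next
    fix x assume "x \<in> (\<Union>n\<in>N. {x \<in> carrier G. n \<otimes> x \<in> S})"
    then obtain n where "n \<in> N" "x \<in> carrier G" "n \<otimes> x \<in> S"
      by blast
    then have "N #> x = N #> (n \<otimes> x)"
      using rcoset_eq_iff N.mem_carrier by blast
    then show "x \<in> {x \<in> carrier G. N #> x \<in> (#>) N ` S}"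
      using \<open>x \<in> carrier G\<close> \<open>n \<otimes> x \<in> S\<close> by blast
  qed
  moreover have "openin T {x \<in> carrier G. n \<otimes> x \<in> S}" if "n \<in> N" for n
    using openin_translate[OF S N.mem_carrier[OF that]] .
  ultimately have "openin T {x \<in> carrier G. N #> x \<in> (#>) N ` S}"
    by auto
  moreover have "(#>) N ` S \<subseteq> carrier (G Mod N)"
    using SG unfolding carrier_FactGroup by blast
  ultimately show "openin (quotient_group_topology G T N) ((#>) N ` S)"
    by (simp add: openin_quotient_group_topology)
qed

lemma not_discrete_quotient:
  assumes "\<not> openin T N"
  shows "\<not> discrete_space (quotient_group_topology G T N)"
proof
  assume "discrete_space (quotient_group_topology G T N)"
  moreover have "N \<in> carrier (G Mod N)"
    using N.factorgroup_is_group group.is_monoid monoid.one_closed by fastforce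
  ultimately have "openin (quotient_group_topology G T N) {N}"
    unfolding discrete_space_def topspace_quotient_group_topology by blast
  then have "openin T {x \<in> carrier G. N #> x \<in> {N}}"
    using \<open>N \<in> carrier (G Mod N)\<close> openin_quotient_group_topology by simp
  moreover have "{x \<in> carrier G. N #> x \<in> {N}} = N"
  proof (intro equalityI subsetI)
    show "x \<in> N" if "x \<in> {x \<in> carrier G. N #> x \<in> {N}}" for x
      using that rcoset_eq_self_iff by blast
    show "x \<in> {x \<in> carrier G. N #> x \<in> {N}}" if "x \<in> N" for x
      using that rcoset_eq_self_iff N.mem_carrier by blast
  qed
  ultimately show False
    using assms by simp
qed

lemma countable_pseudocharacter_quotient:
  assumes "countable \<V>" "\<V> \<noteq> {}" "\<And>V. V \<in> \<V> \<Longrightarrow> openin T V \<and> \<one> \<in> V"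
    and "\<And>V. V \<in> \<V> \<Longrightarrow> \<exists>W\<in>\<V>. \<forall>a\<in>W. \<forall>b\<in>W. inv a \<otimes> b \<in> V"
    and "N = \<Inter>\<V>"
  shows "countable_pseudocharacter (G Mod N) (quotient_group_topology G T N)"
  unfolding countable_pseudocharacter_def gdelta_in_def
proof (intro exI conjI)
  let ?\<W> = "(\<lambda>V. (#>) N ` V) ` \<V>"
  show "countable ?\<W>" "?\<W> \<noteq> {}"
    using assms(1,2) by auto
  show "\<forall>W\<in>?\<W>. openin (quotient_group_topology G T N) W"
    using assms(3) open_map_rcoset unfolding open_map_def by blast
  show "{\<one>\<^bsub>G Mod N\<^esub>} = \<Inter>?\<W>"
  proof (intro equalityI subsetI)
    fix C assume "C \<in> {\<one>\<^bsub>G Mod N\<^esub>}"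
    then have "C = N #> \<one>"
      using rcoset_eq_self_iff[of \<one>] by simp
    then show "C \<in> \<Inter>?\<W>"
      using assms(3) by blast
  next
    fix C assume C: "C \<in> \<Inter>?\<W>"
    obtain V\<^sub>0 where "V\<^sub>0 \<in> \<V>"
      using assms(2) by blast
    then obtain x where x: "x \<in> V\<^sub>0" "C = N #> x"
      using C by blast
    then have "x \<in> carrier G"
      using assms(3) \<open>V\<^sub>0 \<in> \<V>\<close> openin_subset_carrier by blast
    have "x \<in> V" if V: "V \<in> \<V>" for V
    proof -
      obtain W where W: "W \<in> \<V>" "\<forall>a\<in>W. \<forall>b\<in>W. inv a \<otimes> b \<in> V"
        using assms(4) V by blast
      then obtain w where "w \<in> W" "N #> x = N #> w"
        using C x(2) by blast
      moreover from this have "w \<in> carrier G"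
        using assms(3) W(1) openin_subset_carrier by blast
      ultimately obtain n where "n \<in> N" "w = n \<otimes> x"
        using rcoset_eq_iff \<open>x \<in> carrier G\<close> by blast
      then have "inv n \<otimes> w \<in> V"
        using W \<open>w \<in> W\<close> assms(5) by blast
      moreover have "inv n \<otimes> w = x"
        using \<open>n \<in> N\<close> \<open>w = n \<otimes> x\<close> \<open>x \<in> carrier G\<close> N.mem_carrier
        by (simp add: m_assoc[symmetric])
      ultimately show ?thesis
        by simp
    qed
    then have "x \<in> N"
      using assms(5) by blast
    then show "C \<in> {\<one>\<^bsub>G Mod N\<^esub>}"
      using x(2) rcoset_eq_self_iff \<open>x \<in> carrier G\<close> by simp
  qed
qed

lemma basically_disconnected_quotient:
  "basically_disconnected T \<Longrightarrow> basically_disconnected (quotient_group_topology G T N)"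
  using basically_disconnected_open_quotient quotient_imp_continuous_map[OF quotient_map_rcoset]
    open_map_rcoset quotient_imp_surjective_map[OF quotient_map_rcoset] by blast

lemma boolean_clopen_subgroup_quotient:
  assumes "openin T U" "\<one> \<in> U" "\<And>x. x \<in> U \<Longrightarrow> x \<otimes> x \<in> N"
  obtains H where "subgroup H (G Mod N)" "openin (quotient_group_topology G T N) H"
    "closedin (quotient_group_topology G T N) H" "boolean_group ((G Mod N)\<lparr>carrier := H\<rparr>)"
proof -
  interpret p: group_hom G "G Mod N" "(#>) N"
    by (rule group_hom_rcoset)
  obtain V where V: "openin T V" "\<one> \<in> V" "\<And>u v. u \<in> V \<Longrightarrow> v \<in> V \<Longrightarrow> u \<otimes> v \<in> U"
    using nbhd_of_one_mult[OF continuous_mult assms(1)] assms(2) by auto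
  have VG: "V \<subseteq> carrier G"
    using V(1) by (rule openin_subset_carrier)
  define H where "H = generate (G Mod N) ((#>) N ` V)"
  have square: "(N #> u) \<otimes>\<^bsub>G Mod N\<^esub> (N #> u) = \<one>\<^bsub>G Mod N\<^esub>"
    if "u \<in> carrier G" "u \<otimes> u \<in> N" for u
  proof -
    have "(N #> u) \<otimes>\<^bsub>G Mod N\<^esub> (N #> u) = N #> (u \<otimes> u)"
      using p.hom_mult[OF that(1) that(1)] by simp
    also have "\<dots> = N"
      using rcoset_eq_self_iff[OF m_closed[OF that(1) that(1)]] that(2) by blast
    finally show ?thesis
      by simp
  qed
  have involution: "c \<otimes>\<^bsub>G Mod N\<^esub> c = \<one>\<^bsub>G Mod N\<^esub>" if c: "c \<in> (#>) N ` V" for c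
  proof -
    obtain u where "u \<in> V" "c = N #> u"
      using c by blast
    moreover from this have "u \<in> U"
      using V(3)[of u \<one>] V(2) VG by auto
    ultimately show ?thesis
      using square assms(3) VG by auto
  qed
  have commute: "c \<otimes>\<^bsub>G Mod N\<^esub> d = d \<otimes>\<^bsub>G Mod N\<^esub> c"
    if cd: "c \<in> (#>) N ` V" "d \<in> (#>) N ` V" for c d
  proof -
    obtain u v where uv: "u \<in> V" "v \<in> V" "c = N #> u" "d = N #> v"
      using cd by blast
    then have carrier: "u \<in> carrier G" "v \<in> carrier G"
      using VG by auto
    then have "c \<otimes>\<^bsub>G Mod N\<^esub> d = N #> (u \<otimes> v)"
      using uv p.hom_mult by simp
    moreover have "(u \<otimes> v) \<otimes> (u \<otimes> v) \<in> N"
      using assms(3) V(3) uv by blast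
    ultimately have "(c \<otimes>\<^bsub>G Mod N\<^esub> d) \<otimes>\<^bsub>G Mod N\<^esub> (c \<otimes>\<^bsub>G Mod N\<^esub> d) = \<one>\<^bsub>G Mod N\<^esub>"
      using square[of "u \<otimes> v"] carrier by (simp del: p.hom_mult)
    moreover have "c \<in> carrier (G Mod N)" "d \<in> carrier (G Mod N)"
      using uv carrier by simp_all
    ultimately show ?thesis
      using group.involutions_commute[OF N.factorgroup_is_group] involution cd by blast
  qed
  have sub: "(#>) N ` V \<subseteq> carrier (G Mod N)"
    using VG by auto
  have "subgroup H (G Mod N)"
    unfolding H_def using group.generate_is_subgroup[OF N.factorgroup_is_group sub] .
  moreover have "boolean_group ((G Mod N)\<lparr>carrier := H\<rparr>)"
    unfolding H_def using group.boolean_group_generate[OF N.factorgroup_is_group sub commute involution] .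
  moreover have "openin T {x \<in> carrier G. N #> x \<in> H}" "closedin T {x \<in> carrier G. N #> x \<in> H}"
  proof -
    have "V \<subseteq> {x \<in> carrier G. N #> x \<in> H}"
      unfolding H_def using VG by (auto intro: generate.incl)
    then show "openin T {x \<in> carrier G. N #> x \<in> H}" "closedin T {x \<in> carrier G. N #> x \<in> H}"
      using clopen_subgroup[OF p.subgroup_vimage[OF \<open>subgroup H (G Mod N)\<close>] V(1,2)] by auto
  qed
  moreover have "H \<subseteq> carrier (G Mod N)"
    using \<open>subgroup H (G Mod N)\<close> by (rule subgroup.subset)
  ultimately show ?thesis
    using that by (simp add: openin_quotient_group_topology closedin_quotient_group_topology)
qed

end

theorem theorem2:
  fixes G :: "('a, 'b) monoid_scheme" and T :: "'a topology"
  assumes "topological_group G T"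
    and "Lindelof_space T"
    and "Hausdorff_space T"
    and "basically_disconnected T"
  shows "P_space T \<or>
    (\<exists>N. N \<lhd> G \<and> closedin T N \<and>
       (let Q = quotient_group_topology G T N in
          \<not> discrete_space Q \<and>
          countable_pseudocharacter (G Mod N) Q \<and>
          (\<exists>H. subgroup H (G Mod N) \<and> openin Q H \<and>
               boolean_group ((G Mod N)\<lparr>carrier := H\<rparr>) \<and>
               basically_disconnected (subtopology Q H))))"
proof (cases "P_space T")
  case False
  interpret top_group G T
    using assms(1) by (rule top_groupI)
  obtain \<V> where \<V>: "countable \<V>" "\<V> \<noteq> {}" "\<And>V. V \<in> \<V> \<Longrightarrow> openin T V \<and> \<one>\<^bsub>G\<^esub> \<in> V"
    "\<And>V. V \<in> \<V> \<Longrightarrow> \<exists>W\<in>\<V>. \<forall>a\<in>W. \<forall>b\<in>W. inv\<^bsub>G\<^esub> a \<otimes>\<^bsub>G\<^esub> b \<in> V"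
    and N: "\<Inter>\<V> \<lhd> G" "closedin T (\<Inter>\<V>)" "\<not> openin T (\<Inter>\<V>)"
    using not_P_space_imp_normal_Inter_nbhds[OF assms(2) False] by blast
  interpret quotient_top_group G T "\<Inter>\<V>"
    unfolding quotient_top_group_def using top_groupI[OF assms(1)] N(1) by blast
  have "gdelta_in T (\<Inter>\<V>)"
    unfolding gdelta_in_def using \<V>(1-3) by blast
  then obtain U where "openin T U" "\<one>\<^bsub>G\<^esub> \<in> U" "\<And>x. x \<in> U \<Longrightarrow> x \<otimes>\<^bsub>G\<^esub> x \<in> \<Inter>\<V>"
    using squares_near_one_in_gdelta[OF assms(2-4)] N.one_closed by blast
  then obtain H where H: "subgroup H (G Mod \<Inter>\<V>)" "openin (quotient_group_topology G T (\<Inter>\<V>)) H"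
    "closedin (quotient_group_topology G T (\<Inter>\<V>)) H" "boolean_group ((G Mod \<Inter>\<V>)\<lparr>carrier := H\<rparr>)"
    by (rule boolean_clopen_subgroup_quotient)
  moreover have "basically_disconnected (subtopology (quotient_group_topology G T (\<Inter>\<V>)) H)"
    using basically_disconnected_clopen_subtopology[OF basically_disconnected_quotient[OF assms(4)] H(2,3)] .
  ultimately show ?thesis
    using N not_discrete_quotient[OF N(3)] countable_pseudocharacter_quotient[OF \<V> refl]
    unfolding Let_def by blast
qed simp

end
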